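(* Let $k_1,k_2$ be positive integers and let $D$ be a digraph containing no subdivision of $C(k_1,k_2)$ as a subdigraph. Then $\chi(D)\le 3\,\alpha(D)\,k$, where $k=\max\{k_1,k_2\}$ and $\alpha(D)$ is the maximum size of a stable set of (the underlying graph of) $D$.
   Context: Digraphs are orientations of finite simple graphs (no loops, no multiple arcs, no pair of opposite arcs). The chromatic number $\chi(D)$ of a digraph is the chromatic number of its underlying undirected graph. For positive integers $k_1,k_2$, $C(k_1,k_2)$ is the oriented cycle formed by two internally disjoint directed $xy$-paths of lengths $k_1$ and $k_2$. A subdivision of a digraph $H$ is obtained by replacing each arc $(u,v)$ by a directed $uv$-path of length at least $1$, these paths being internally disjoint. *)

theory Defs
  imports Main
begin

definition oriented_graph :: "'a set \<Rightarrow> ('a \<times> 'a) set \<Rightarrow> bool" where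
  "oriented_graph V A \<longleftrightarrow> finite V \<and> A \<subseteq> V \<times> V \<and>
     (\<forall>u. (u, u) \<notin> A) \<and> (\<forall>u v. (u, v) \<in> A \<longrightarrow> (v, u) \<notin> A)"

definition adj :: "('a \<times> 'a) set \<Rightarrow> 'a \<Rightarrow> 'a \<Rightarrow> bool" where
  "adj A u v \<longleftrightarrow> (u, v) \<in> A \<or> (v, u) \<in> A"

definition proper_colouring :: "'a set \<Rightarrow> ('a \<times> 'a) set \<Rightarrow> nat \<Rightarrow> ('a \<Rightarrow> nat) \<Rightarrow> bool" where
  "proper_colouring V A k c \<longleftrightarrow> (\<forall>v\<in>V. c v < k) \<and> (\<forall>u\<in>V. \<forall>v\<in>V. adj A u v \<longrightarrow> c u \<noteq> c v)"

definition chromatic_number :: "'a set \<Rightarrow> ('a \<times> 'a) set \<Rightarrow> nat" where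
  "chromatic_number V A = (LEAST k. \<exists>c. proper_colouring V A k c)"

definition stable_set :: "'a set \<Rightarrow> ('a \<times> 'a) set \<Rightarrow> 'a set \<Rightarrow> bool" where
  "stable_set V A S \<longleftrightarrow> S \<subseteq> V \<and> (\<forall>u\<in>S. \<forall>v\<in>S. \<not> adj A u v)"

definition stability_number :: "'a set \<Rightarrow> ('a \<times> 'a) set \<Rightarrow> nat" where
  "stability_number V A = Max (card ` {S. stable_set V A S})"

(* p is a directed path in (V,A) from x to y: distinct vertices, consecutive
   vertices joined by arcs; its length is  length p - 1 *)
definition dipath :: "'a set \<Rightarrow> ('a \<times> 'a) set \<Rightarrow> 'a list \<Rightarrow> 'a \<Rightarrow> 'a \<Rightarrow> bool" where
  "dipath V A p x y \<longleftrightarrow> p \<noteq> [] \<and> distinct p \<and> set p \<subseteq> V \<and> hd p = x \<and> last p = y \<and>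
     (\<forall>i. Suc i < length p \<longrightarrow> (p ! i, p ! Suc i) \<in> A)"

(* (V,A) contains a subdivision of C(k1,k2) as a subdigraph: a subdivision of
   C(k1,k2) is exactly the union of two internally disjoint directed xy-paths
   of lengths l1 \<ge> k1 and l2 \<ge> k2 (x \<noteq> y), using distinct arcs, i.e. not both
   equal to the single arc xy. *)
definition contains_subdiv_C :: "'a set \<Rightarrow> ('a \<times> 'a) set \<Rightarrow> nat \<Rightarrow> nat \<Rightarrow> bool" where
  "contains_subdiv_C V A k1 k2 \<longleftrightarrow>
     (\<exists>x y p1 p2. x \<noteq> y \<and> dipath V A p1 x y \<and> dipath V A p2 x y \<and>
        set p1 \<inter> set p2 = {x, y} \<and>
        length p1 - 1 \<ge> k1 \<and> length p2 - 1 \<ge> k2 \<and>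
        (length p1 > 2 \<or> length p2 > 2))"

end

theory Submission
  imports Defs "HOL-Library.Disjoint_Sets"
begin

(*
  By the Gallai-Milgram theorem the vertices of D can be covered by at most alpha(D)
  disjoint directed paths, so with disjoint palettes for different paths it suffices to
  colour the vertices of one directed path P = v_0 ... v_(n-1) with 3k colours. Split the
  indices of P into their k residue classes modulo k, again with disjoint palettes. Two
  indices of one class are at least k apart, so two crossing chords v_a v_c and v_b v_d
  (a < b < c < d) inside a class would, together with the segments v_a ... v_b and
  v_c ... v_d of P, form a subdivision of C(k1,k2). Hence each class induces a graph
  without crossing chords with respect to the order of P; such a graph has a vertex of
  degree at most 2 (the first vertex inside a shortest chord, or the first vertex if there
  is no chord), so it is 3-colourable.
*)

lemma proper_colouring_mono:
  "proper_colouring V A k c \<Longrightarrow> k \<le> l \<Longrightarrow> proper_colouring V A l c"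
  unfolding proper_colouring_def by fastforce

lemma chromatic_number_le:
  "proper_colouring V A k c \<Longrightarrow> chromatic_number V A \<le> k"
  unfolding chromatic_number_def by (rule Least_le) blast

lemma proper_colouring_inv_image:
  assumes "inj_on g S" and "proper_colouring S (inv_image A g) k c"
  shows "proper_colouring (g ` S) A k (c \<circ> the_inv_into S g)"
  using assms unfolding proper_colouring_def adj_def by (auto simp: the_inv_into_f_f)

lemma proper_colouring_insert:
  assumes "proper_colouring (W - {u}) A k c" and "finite W" and "(u, u) \<notin> A"
    and "card {w\<in>W. adj A u w} < k"
  obtains free where "proper_colouring W A k (c(u := free))"
proof -
  let ?N = "{w\<in>W. adj A u w}"
  have "card (c ` ?N) < card {..<k}"
    using card_image_le[of ?N c] assms(2,4) by simp
  moreover have "finite (c ` ?N)" using \<open>finite W\<close> by simp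
  ultimately have "\<not> {..<k} \<subseteq> c ` ?N"
    using card_mono[of "c ` ?N" "{..<k}"] by linarith
  then obtain free where free: "free < k" "free \<notin> c ` ?N"
    by blast
  have "proper_colouring W A k (c(u := free))"
    unfolding proper_colouring_def
  proof (intro conjI ballI impI)
    fix v assume "v \<in> W"
    then show "(c(u := free)) v < k" using assms(1) free(1) unfolding proper_colouring_def by simp
  next
    fix v w assume vw: "v \<in> W" "w \<in> W" "adj A v w"
    consider "v = u" | "w = u" | "v \<noteq> u" "w \<noteq> u" by blast
    then show "(c(u := free)) v \<noteq> (c(u := free)) w"
    proof cases
      case 1
      then have "w \<in> ?N" "w \<noteq> u" using vw \<open>(u, u) \<notin> A\<close> unfolding adj_def by auto
      then show ?thesis using 1 free(2) by force
    next
      case 2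
      then have "v \<in> ?N" "v \<noteq> u" using vw \<open>(u, u) \<notin> A\<close> unfolding adj_def by auto
      then show ?thesis using 2 free(2) by force
    next
      case 3
      then show ?thesis using vw assms(1) unfolding proper_colouring_def by simp
    qed
  qed
  then show ?thesis using that by blast
qed

lemma proper_colouring_degenerate:
  assumes "finite V" and loopless: "\<And>u. (u, u) \<notin> A"
    and degenerate: "\<And>W. W \<subseteq> V \<Longrightarrow> W \<noteq> {} \<Longrightarrow> \<exists>u\<in>W. card {w\<in>W. adj A u w} \<le> d"
  shows "\<exists>c. proper_colouring V A (Suc d) c"
  using \<open>finite V\<close>
proof (induction V rule: finite_remove_induct)
  case empty
  show ?case by (simp add: proper_colouring_def)
next
  case (remove W)
  obtain u where "u \<in> W" and "card {w\<in>W. adj A u w} \<le> d"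
    using degenerate remove.hyps(2,3) by blast
  moreover obtain c where "proper_colouring (W - {u}) A (Suc d) c"
    using remove.IH \<open>u \<in> W\<close> by blast
  ultimately show ?case
    using proper_colouring_insert[OF _ remove.hyps(1) loopless] by (metis less_Suc_eq_le)
qed

lemma proper_colouring_Union:
  assumes "finite \<C>" and "V \<subseteq> \<Union>\<C>"
    and parts: "\<And>W. W \<in> \<C> \<Longrightarrow> \<exists>c. proper_colouring W A k c"
  shows "\<exists>c. proper_colouring V A (k * card \<C>) c"
proof -
  obtain h where h: "bij_betw h {..<card \<C>} \<C>"
    using ex_bij_betw_nat_finite[OF \<open>finite \<C>\<close>] by (auto simp: atLeast0LessThan)
  have "\<forall>r\<in>{..<card \<C>}. \<exists>c. proper_colouring (h r) A k c"
    using parts bij_betwE[OF h] by blast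
  then obtain col where col: "\<And>r. r < card \<C> \<Longrightarrow> proper_colouring (h r) A k (col r)"
    by (metis bchoice lessThan_iff)
  define part where "part v = (SOME r. r < card \<C> \<and> v \<in> h r)" for v
  have part: "part v < card \<C> \<and> v \<in> h (part v)" if v: "v \<in> V" for v
  proof -
    obtain W where "W \<in> \<C>" "v \<in> W" using v assms(2) by blast
    then have "\<exists>r. r < card \<C> \<and> v \<in> h r" using bij_betw_imp_surj_on[OF h] by auto
    then show ?thesis unfolding part_def by (rule someI_ex)
  qed
  define c where "c v = k * part v + col (part v) v" for v
  have colour_lt: "col (part v) v < k" if "v \<in> V" for v
    using col part[OF that] unfolding proper_colouring_def by blast
  have block: "c v div k = part v" if "v \<in> V" for v
    using colour_lt[OF that] unfolding c_def by simp
  have "proper_colouring V A (k * card \<C>) c"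
    unfolding proper_colouring_def
  proof (intro conjI ballI impI)
    fix v assume v: "v \<in> V"
    have "c v < k * Suc (part v)" using colour_lt[OF v] unfolding c_def by simp
    also have "\<dots> \<le> k * card \<C>" using part[OF v] by (intro mult_le_mono2) simp
    finally show "c v < k * card \<C>" .
  next
    fix u v assume u: "u \<in> V" and v: "v \<in> V" and "adj A u v"
    show "c u \<noteq> c v"
    proof
      assume eq: "c u = c v"
      then have same: "part u = part v" using block u v by metis
      then have "col (part u) u \<noteq> col (part u) v"
        using col part u v \<open>adj A u v\<close> unfolding proper_colouring_def by metis
      then show False using eq same unfolding c_def by simp
    qed
  qed
  then show ?thesis by blast
qed

definition noncrossing :: "'b::linorder set \<Rightarrow> ('b \<times> 'b) set \<Rightarrow> bool" where
  "noncrossing S A \<longleftrightarrow> (\<forall>a\<in>S. \<forall>b\<in>S. \<forall>c\<in>S. \<forall>d\<in>S.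
     a < b \<longrightarrow> b < c \<longrightarrow> c < d \<longrightarrow> adj A a c \<longrightarrow> \<not> adj A b d)"

definition chord :: "'b::linorder set \<Rightarrow> ('b \<times> 'b) set \<Rightarrow> 'b \<Rightarrow> 'b \<Rightarrow> bool" where
  "chord S A a b \<longleftrightarrow> a \<in> S \<and> b \<in> S \<and> a < b \<and> adj A a b \<and> S \<inter> {a<..<b} \<noteq> {}"

lemma adj_commute: "adj A u v \<longleftrightarrow> adj A v u"
  unfolding adj_def by blast

lemma noncrossingD:
  "noncrossing S A \<Longrightarrow> a \<in> S \<Longrightarrow> b \<in> S \<Longrightarrow> c \<in> S \<Longrightarrow> d \<in> S \<Longrightarrow>
    a < b \<Longrightarrow> b < c \<Longrightarrow> c < d \<Longrightarrow> adj A a c \<Longrightarrow> adj A b d \<Longrightarrow> False"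
  unfolding noncrossing_def by blast

lemma noncrossing_subset: "noncrossing S A \<Longrightarrow> W \<subseteq> S \<Longrightarrow> noncrossing W A"
  unfolding noncrossing_def by blast

lemma card_upper_neighbours_le_1:
  fixes S :: "'b::linorder set"
  assumes "finite S" and "u \<in> S" and "\<And>y. \<not> chord S A u y"
  shows "card ({w\<in>S. adj A u w} \<inter> {u<..}) \<le> 1"
proof -
  let ?U = "{w\<in>S. adj A u w} \<inter> {u<..}"
  have "\<not> x < y" if "x \<in> ?U" "y \<in> ?U" for x y
    using that assms(2) assms(3)[of y] unfolding chord_def by auto
  then have "\<forall>x\<in>?U. \<forall>y\<in>?U. x = y" by (meson linorder_neq_iff)
  then show ?thesis using card_le_Suc0_iff_eq[of ?U] \<open>finite S\<close> by simp
qed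

(* The first vertex inside a shortest chord pq has p as its only lower neighbour and is
   itself the lower end of no chord. *)
lemma low_degree_inside_shortest_chord:
  fixes S :: "'b::linorder set"
  assumes "finite S" and loopless: "\<And>u. (u, u) \<notin> A" and "noncrossing S A"
    and "chord S A p q"
    and shortest: "\<And>a b. chord S A a b \<Longrightarrow> card (S \<inter> {p<..<q}) \<le> card (S \<inter> {a<..<b})"
  shows "\<exists>u\<in>S. card {w\<in>S. adj A u w} \<le> 2"
proof -
  define u where "u = Min (S \<inter> {p<..<q})"
  let ?N = "{w\<in>S. adj A u w}"
  have "u \<in> S \<inter> {p<..<q}"
    using \<open>chord S A p q\<close> \<open>finite S\<close> unfolding chord_def u_def by (intro Min_in) auto
  then have u: "u \<in> S" "p < u" "u < q" by auto
  have first: "u \<le> w" if "w \<in> S" "p < w" "w < q" for w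
    using that \<open>finite S\<close> unfolding u_def by (intro Min_le) auto
  have "?N \<inter> {..<u} \<subseteq> {p}"
  proof
    fix w assume w: "w \<in> ?N \<inter> {..<u}"
    then have "adj A w u" by (simp add: adj_commute)
    then have "\<not> w < p"
      using noncrossingD[OF \<open>noncrossing S A\<close>, of w p u q] \<open>chord S A p q\<close> w u
      unfolding chord_def by auto
    moreover have "\<not> p < w" using first[of w] w u by force
    ultimately show "w \<in> {p}" by simp
  qed
  then have "card (?N \<inter> {..<u}) \<le> 1"
    using card_mono[of "{p}"] by fastforce
  have "\<not> chord S A u y" for y
  proof
    assume "chord S A u y"
    then have "y \<le> q"
      using noncrossingD[OF \<open>noncrossing S A\<close>, of p u q y] \<open>chord S A p q\<close> u
      unfolding chord_def by force
    then have "S \<inter> {u<..<y} \<subset> S \<inter> {p<..<q}"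
      using u by auto
    then have "card (S \<inter> {u<..<y}) < card (S \<inter> {p<..<q})"
      using \<open>finite S\<close> by (intro psubset_card_mono) auto
    then show False using shortest[OF \<open>chord S A u y\<close>] by simp
  qed
  then have "card (?N \<inter> {u<..}) \<le> 1"
    using card_upper_neighbours_le_1[OF \<open>finite S\<close> u(1)] by blast
  moreover have "?N \<subseteq> (?N \<inter> {..<u}) \<union> (?N \<inter> {u<..})"
    using loopless unfolding adj_def by (fastforce simp: not_less order.order_iff_strict)
  then have "card ?N \<le> card (?N \<inter> {..<u} \<union> ?N \<inter> {u<..})"
    by (rule card_mono[rotated]) (use \<open>finite S\<close> in simp)
  moreover have "\<dots> \<le> card (?N \<inter> {..<u}) + card (?N \<inter> {u<..})"
    by (rule card_Un_le)
  ultimately show ?thesis using \<open>card (?N \<inter> {..<u}) \<le> 1\<close> u(1) by force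
qed

lemma noncrossing_low_degree:
  fixes S :: "'b::linorder set"
  assumes "finite S" and "S \<noteq> {}" and loopless: "\<And>u. (u, u) \<notin> A" and "noncrossing S A"
  shows "\<exists>u\<in>S. card {w\<in>S. adj A u w} \<le> 2"
proof (cases "\<exists>a b. chord S A a b")
  case False
  define u where "u = Min S"
  have u: "u \<in> S" "\<And>w. w \<in> S \<Longrightarrow> u \<le> w"
    using \<open>finite S\<close> \<open>S \<noteq> {}\<close> unfolding u_def by auto
  have "{w\<in>S. adj A u w} \<inter> {u<..} = {w\<in>S. adj A u w}"
    using u loopless unfolding adj_def by (auto simp: order.order_iff_strict)
  moreover have "card ({w\<in>S. adj A u w} \<inter> {u<..}) \<le> 1"
    using card_upper_neighbours_le_1[OF \<open>finite S\<close> u(1)] False by blast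
  ultimately show ?thesis using u(1) by force
next
  case True
  then obtain a b where "chord S A a b" by blast
  then obtain pq where "chord S A (fst pq) (snd pq)"
    and "\<forall>ab. chord S A (fst ab) (snd ab) \<longrightarrow>
      card (S \<inter> {fst pq<..<snd pq}) \<le> card (S \<inter> {fst ab<..<snd ab})"
    using ex_has_least_nat[of "\<lambda>ab. chord S A (fst ab) (snd ab)" "(a, b)"
        "\<lambda>ab. card (S \<inter> {fst ab<..<snd ab})"] by auto
  then show ?thesis
    using low_degree_inside_shortest_chord[OF assms(1,3,4), of "fst pq" "snd pq"]
    by (metis fst_conv snd_conv)
qed

lemma noncrossing_colouring:
  fixes S :: "'b::linorder set"
  assumes "finite S" and "\<And>u. (u, u) \<notin> A" and "noncrossing S A"
  shows "\<exists>c. proper_colouring S A 3 c"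
  using proper_colouring_degenerate[OF assms(1,2), of 2]
    noncrossing_low_degree[OF finite_subset[OF _ assms(1)] _ assms(2) noncrossing_subset[OF assms(3)]]
  by (simp add: numeral_3_eq_3)

definition directed_path :: "('a \<times> 'a) set \<Rightarrow> 'a list \<Rightarrow> bool" where
  "directed_path A p \<longleftrightarrow> p \<noteq> [] \<and> distinct p \<and> successively (\<lambda>u v. (u, v) \<in> A) p"

lemma dipath_iff_directed_path:
  "dipath V A p x y \<longleftrightarrow> directed_path A p \<and> set p \<subseteq> V \<and> hd p = x \<and> last p = y"
  unfolding dipath_def directed_path_def successively_conv_nth by argo

lemma directed_path_map:
  "inj_on f (set L) \<Longrightarrow> directed_path (inv_image A f) L \<Longrightarrow> directed_path A (map f L)"
  unfolding directed_path_def by (simp add: successively_map distinct_map)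

lemma directed_path_upt:
  assumes "directed_path A P" and "i \<le> j" and "j < length P"
  shows "directed_path (inv_image A ((!) P)) [i..<Suc j]"
  unfolding directed_path_def successively_conv_nth
proof (intro conjI allI impI)
  fix t assume t: "Suc t < length [i..<Suc j]"
  have "successively (\<lambda>u v. (u, v) \<in> A) P"
    using assms(1) unfolding directed_path_def by blast
  then have "(P ! (i + t), P ! Suc (i + t)) \<in> A"
    by (rule successively_nth) (use t assms(2,3) in simp)
  then show "([i..<Suc j] ! t, [i..<Suc j] ! Suc t) \<in> inv_image A ((!) P)"
    using t by (simp del: upt_Suc)
qed (use assms(2) in simp_all)

lemma directed_path_Cons:
  "directed_path A p \<Longrightarrow> x \<notin> set p \<Longrightarrow> (x, hd p) \<in> A \<Longrightarrow> directed_path A (x # p)"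
  unfolding directed_path_def by (auto simp: successively_Cons)

lemma directed_path_snoc:
  "directed_path A p \<Longrightarrow> x \<notin> set p \<Longrightarrow> (last p, x) \<in> A \<Longrightarrow> directed_path A (p @ [x])"
  unfolding directed_path_def by (auto simp: successively_append_iff)

lemma contains_subdiv_C_of_index_paths:
  assumes P: "distinct P" "set P \<subseteq> V"
    and L: "directed_path (inv_image A ((!) P)) I" "directed_path (inv_image A ((!) P)) J"
      "set I \<union> set J \<subseteq> {..<length P}"
    and ends: "hd I = hd J" "last I = last J" "hd I \<noteq> last I"
      "set I \<inter> set J = {hd I, last I}"
    and lengths: "k1 < length I" "k2 < length J" "2 < length I \<or> 2 < length J"
  shows "contains_subdiv_C V A k1 k2"
proof -
  have inj: "inj_on ((!) P) (set I \<union> set J)"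
    using inj_on_nth[OF P(1)] L(3) by (meson inj_on_subset lessThan_iff subsetD)
  have walk: "dipath V A (map ((!) P) L) (P ! hd L) (P ! last L)"
    if "directed_path (inv_image A ((!) P)) L" "set L \<subseteq> set I \<union> set J" for L
  proof -
    have "directed_path A (map ((!) P) L)"
      using directed_path_map[OF inj_on_subset[OF inj that(2)] that(1)] .
    moreover have "set (map ((!) P) L) \<subseteq> V"
      using that(2) L(3) P(2) nth_mem by fastforce
    moreover have "L \<noteq> []" using that(1) unfolding directed_path_def by blast
    ultimately show ?thesis unfolding dipath_iff_directed_path by (simp add: hd_map last_map)
  qed
  have "set (map ((!) P) I) \<inter> set (map ((!) P) J) = (!) P ` (set I \<inter> set J)"
    using inj_on_image_Int[OF inj Un_upper1 Un_upper2] by simp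
  then have "set (map ((!) P) I) \<inter> set (map ((!) P) J) = {P ! hd I, P ! last I}"
    using ends(4) by simp
  moreover have "P ! hd I \<noteq> P ! last I"
    using inj ends(3) L(1) unfolding directed_path_def by (auto dest: inj_onD)
  moreover have "dipath V A (map ((!) P) I) (P ! hd I) (P ! last I)"
    using walk[OF L(1)] by simp
  moreover have "dipath V A (map ((!) P) J) (P ! hd I) (P ! last I)"
    using walk[OF L(2)] ends(1,2) by simp
  ultimately show ?thesis
    unfolding contains_subdiv_C_def using lengths
    by (intro exI[of _ "P ! hd I"] exI[of _ "P ! last I"] exI[of _ "map ((!) P) I"]
        exI[of _ "map ((!) P) J"]) auto
qed

lemma contains_subdiv_C_if_arcs_between_segments:
  assumes P: "directed_path A P" "set P \<subseteq> V"
    and segs: "a < b" "c < d" "b < c \<or> d < a" "b < length P" "d < length P"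
    and long: "max k1 k2 \<le> b - a" "max k1 k2 \<le> d - c"
    and arcs: "(P ! a, P ! c) \<in> A" "adj A (P ! b) (P ! d)"
  shows "contains_subdiv_C V A k1 k2"
proof -
  have dP: "distinct P" using P(1) unfolding directed_path_def by blast
  note seg_ab = directed_path_upt[OF P(1), of a b] and seg_cd = directed_path_upt[OF P(1), of c d]
  from arcs(2) consider "(P ! b, P ! d) \<in> A" | "(P ! d, P ! b) \<in> A" unfolding adj_def by blast
  then show ?thesis
  proof cases
    case 1
    let ?I = "a # [c..<Suc d]" and ?J = "[a..<Suc b] @ [d]"
    have "directed_path (inv_image A ((!) P)) ?I"
      using seg_cd segs arcs(1) by (intro directed_path_Cons) auto
    moreover have "directed_path (inv_image A ((!) P)) ?J"
      using seg_ab segs 1 by (intro directed_path_snoc) auto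
    ultimately show ?thesis
    proof (rule contains_subdiv_C_of_index_paths[OF dP P(2)])
      show "set ?I \<inter> set ?J = {hd ?I, last ?I}" using segs by auto
    qed (use segs long in auto)
  next
    case 2
    let ?I = "[a..<Suc b]" and ?J = "a # [c..<Suc d] @ [b]"
    have "directed_path (inv_image A ((!) P)) ?J"
      using seg_cd segs arcs(1) 2
      by (intro directed_path_Cons directed_path_snoc) (auto simp del: upt_Suc)
    with seg_ab show ?thesis
    proof (rule contains_subdiv_C_of_index_paths[OF dP P(2)])
      show "set ?I \<inter> set ?J = {hd ?I, last ?I}" using segs by auto
    qed (use segs long in auto)
  qed
qed

lemma contains_subdiv_C_if_crossing:
  assumes P: "directed_path A P" "set P \<subseteq> V"
    and order: "a < b" "b < c" "c < d" "d < length P"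
    and long: "max k1 k2 \<le> b - a" "max k1 k2 \<le> d - c"
    and chords: "adj A (P ! a) (P ! c)" "adj A (P ! b) (P ! d)"
  shows "contains_subdiv_C V A k1 k2"
proof -
  from chords(1) consider "(P ! a, P ! c) \<in> A" | "(P ! c, P ! a) \<in> A" unfolding adj_def by blast
  then show ?thesis
  proof cases
    case 1
    then show ?thesis
      using contains_subdiv_C_if_arcs_between_segments[OF P, of a b c d] order long chords(2) by simp
  next
    case 2
    have "adj A (P ! d) (P ! b)" using chords(2) unfolding adj_def by blast
    then show ?thesis
      using contains_subdiv_C_if_arcs_between_segments[OF P, of c d a b] order long 2 by simp
  qed
qed

lemma path_colouring:
  assumes loopless: "\<And>u. (u, u) \<notin> A" and P: "directed_path A P" "set P \<subseteq> V"
    and no_subdiv: "\<not> contains_subdiv_C V A k1 k2" and "0 < max k1 k2"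
  shows "\<exists>c. proper_colouring (set P) A (3 * max k1 k2) c"
proof -
  define k where "k = max k1 k2"
  have "0 < k" using \<open>0 < max k1 k2\<close> unfolding k_def .
  define B where "B = inv_image A ((!) P)"
  define residue where "residue r = {i\<in>{..<length P}. i mod k = r}" for r
  have "\<exists>c. proper_colouring (residue r) B 3 c" for r
  proof (rule noncrossing_colouring)
    show "finite (residue r)" unfolding residue_def by simp
    show "(i, i) \<notin> B" for i using loopless unfolding B_def by simp
    have spaced: "k \<le> j - i" if "i \<in> residue r" "j \<in> residue r" "i < j" for i j
      using that \<open>0 < k\<close> mod_eq_dvd_iff_nat[of i j k]
      unfolding residue_def by (auto intro: dvd_imp_le)
    show "noncrossing (residue r) B"
      unfolding noncrossing_def
    proof (intro ballI impI notI)
      fix a b c d assume abcd: "a \<in> residue r" "b \<in> residue r" "c \<in> residue r" "d \<in> residue r"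
        "a < b" "b < c" "c < d" "adj B a c" "adj B b d"
      have "contains_subdiv_C V A k1 k2"
        by (rule contains_subdiv_C_if_crossing[OF P, of a b c d])
          (use abcd spaced[of a b] spaced[of c d] in \<open>auto simp: residue_def k_def B_def adj_def\<close>)
      then show False using no_subdiv by contradiction
    qed
  qed
  then obtain c where "proper_colouring {..<length P} B (3 * card (residue ` {..<k})) c"
    using proper_colouring_Union[of "residue ` {..<k}" "{..<length P}" B 3] \<open>0 < k\<close>
    unfolding residue_def by fastforce
  then have "proper_colouring {..<length P} B (3 * k) c"
    using card_image_le[of "{..<k}" residue] by (auto intro: proper_colouring_mono)
  moreover have "inj_on ((!) P) {..<length P}" "(!) P ` {..<length P} = set P"
    using P(1) unfolding directed_path_def by (auto simp: inj_on_nth set_conv_nth)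
  ultimately show ?thesis
    using proper_colouring_inv_image[of "(!) P" "{..<length P}" A "3 * k" c]
    unfolding B_def k_def by auto
qed

definition path_partition :: "'a set \<Rightarrow> ('a \<times> 'a) set \<Rightarrow> 'a list set \<Rightarrow> bool" where
  "path_partition V A \<P> \<longleftrightarrow> finite \<P> \<and> (\<forall>p\<in>\<P>. directed_path A p) \<and> (\<Union>p\<in>\<P>. set p) = V \<and>
     disjoint_family_on set \<P>"

lemma path_partition_singletons:
  "finite V \<Longrightarrow> path_partition V A ((\<lambda>v. [v]) ` V)"
  unfolding path_partition_def directed_path_def disjoint_family_on_def by auto

lemma path_partition_inj_on_last:
  assumes "path_partition V A \<P>"
  shows "inj_on last \<P>"
proof (rule inj_onI)
  fix p q assume "p \<in> \<P>" "q \<in> \<P>" "last p = last q"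
  moreover have "p \<noteq> []" "q \<noteq> []"
    using assms \<open>p \<in> \<P>\<close> \<open>q \<in> \<P>\<close> unfolding path_partition_def directed_path_def by auto
  ultimately show "p = q"
    using assms unfolding path_partition_def disjoint_family_on_def by (metis disjoint_iff last_in_set)
qed

lemma path_partition_set_subset:
  "path_partition V A \<P> \<Longrightarrow> p \<in> \<P> \<Longrightarrow> set p \<subseteq> V"
  unfolding path_partition_def by (metis UN_upper)

lemma path_partition_last_subset:
  assumes "path_partition V A \<P>"
  shows "last ` \<P> \<subseteq> V"
proof
  fix v assume "v \<in> last ` \<P>"
  then obtain p where "p \<in> \<P>" "v = last p" by blast
  moreover have "p \<noteq> []"
    using assms \<open>p \<in> \<P>\<close> unfolding path_partition_def directed_path_def by blast
  ultimately show "v \<in> V"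
    using assms unfolding path_partition_def by (metis UN_I last_in_set)
qed

lemma path_partition_remove:
  assumes "path_partition V A \<P>" and "p \<in> \<P>"
  shows "path_partition (V - set p) A (\<P> - {p})"
proof -
  have V: "V = (\<Union>q\<in>\<P>. set q)" and disj: "disjoint_family_on set \<P>"
    using assms(1) unfolding path_partition_def by auto
  have "(\<Union>q\<in>\<P> - {p}. set q) = V - set p"
  proof
    show "(\<Union>q\<in>\<P> - {p}. set q) \<subseteq> V - set p"
      using disj assms(2) unfolding V disjoint_family_on_def by blast
    show "V - set p \<subseteq> (\<Union>q\<in>\<P> - {p}. set q)"
      unfolding V by blast
  qed
  moreover have "disjoint_family_on set (\<P> - {p})"
    using disj by (rule disjoint_family_on_mono[rotated]) blast
  ultimately show ?thesis
    using assms(1) unfolding path_partition_def by auto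
qed

lemma path_partition_replace:
  assumes part: "path_partition V A \<P>" and "p \<in> \<P>"
    and q: "directed_path A q" "set q \<inter> (V - set p) = {}"
  shows "path_partition (V - set p \<union> set q) A (insert q (\<P> - {p}))"
    and "card (insert q (\<P> - {p})) = card \<P>"
proof -
  have rest: "path_partition (V - set p) A (\<P> - {p})"
    using path_partition_remove[OF assms(1,2)] .
  then show "path_partition (V - set p \<union> set q) A (insert q (\<P> - {p}))"
    using q unfolding path_partition_def disjoint_family_on_def by auto
  have "q \<notin> \<P> - {p}"
  proof
    assume "q \<in> \<P> - {p}"
    then have "set q \<subseteq> V - set p" by (rule path_partition_set_subset[OF rest])
    moreover have "set q \<noteq> {}" using q(1) unfolding directed_path_def by simp
    ultimately show False using q(2) by (metis Int_absorb2)
  qed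
  moreover have "finite \<P>" using part unfolding path_partition_def by blast
  ultimately have "card (insert q (\<P> - {p})) = Suc (card (\<P> - {p}))" by simp
  also have "\<dots> = card \<P>" using card_Suc_Diff1[OF \<open>finite \<P>\<close> \<open>p \<in> \<P>\<close>] .
  finally show "card (insert q (\<P> - {p})) = card \<P>" .
qed

lemma path_partition_append:
  assumes part: "path_partition (V - {b}) A \<Q>" and "b \<in> V" and "R \<in> \<Q>" and "(last R, b) \<in> A"
  shows "path_partition V A (insert (R @ [b]) (\<Q> - {R}))"
    and "card (insert (R @ [b]) (\<Q> - {R})) = card \<Q>"
proof -
  have "set R \<subseteq> V - {b}" "directed_path A R"
    using part \<open>R \<in> \<Q>\<close> unfolding path_partition_def by auto
  then have "directed_path A (R @ [b])" "set (R @ [b]) \<inter> (V - {b} - set R) = {}"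
    using \<open>(last R, b) \<in> A\<close> by (auto intro: directed_path_snoc)
  moreover have "V - {b} - set R \<union> set (R @ [b]) = V"
    using \<open>set R \<subseteq> V - {b}\<close> \<open>b \<in> V\<close> by auto
  ultimately show "path_partition V A (insert (R @ [b]) (\<Q> - {R}))"
    and "card (insert (R @ [b]) (\<Q> - {R})) = card \<Q>"
    using path_partition_replace[OF part \<open>R \<in> \<Q>\<close>] by metis+
qed

lemma path_partition_butlast:
  assumes part: "path_partition V A \<P>" and "q @ [b] \<in> \<P>" and "q \<noteq> []"
  shows "path_partition (V - {b}) A (insert q (\<P> - {q @ [b]}))"
    and "card (insert q (\<P> - {q @ [b]})) = card \<P>"
proof -
  have "directed_path A (q @ [b])" "set (q @ [b]) \<subseteq> V"
    using part \<open>q @ [b] \<in> \<P>\<close> unfolding path_partition_def by auto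
  then have "directed_path A q" "b \<notin> set q"
    using \<open>q \<noteq> []\<close> unfolding directed_path_def by (auto simp: successively_append_iff)
  moreover have "V - set (q @ [b]) \<union> set q = V - {b}"
    using \<open>set (q @ [b]) \<subseteq> V\<close> \<open>b \<notin> set q\<close> by auto
  ultimately show "path_partition (V - {b}) A (insert q (\<P> - {q @ [b]}))"
    and "card (insert q (\<P> - {q @ [b]})) = card \<P>"
    using path_partition_replace[OF part \<open>q @ [b] \<in> \<P>\<close>, of q] by auto
qed

lemma subset_insert_meets_pair:
  assumes "finite T" and "X \<subseteq> insert b T" and "a \<in> T" and "card T \<le> card X"
  shows "\<exists>x\<in>X \<inter> {a, b}. X - {x} \<subseteq> T"
proof (cases "b \<in> X")
  case True
  then show ?thesis using assms(2) by blast
next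
  case False
  then have "X \<subseteq> T" using assms(2) by blast
  moreover have "a \<in> X"
  proof (rule ccontr)
    assume "a \<notin> X"
    then have "X \<subset> T" using \<open>X \<subseteq> T\<close> \<open>a \<in> T\<close> by blast
    then show False using psubset_card_mono[OF \<open>finite T\<close>] \<open>card T \<le> card X\<close> by (meson leD)
  qed
  ultimately show ?thesis by blast
qed

lemma path_partition_arc_between_ends:
  assumes "path_partition V A \<P>" and "\<forall>S. stable_set V A S \<longrightarrow> card S < card \<P>"
  obtains pa pb where "pa \<in> \<P>" "pb \<in> \<P>" "(last pa, last pb) \<in> A"
proof -
  have "card (last ` \<P>) = card \<P>"
    using card_image[OF path_partition_inj_on_last[OF assms(1)]] .
  then have "\<not> stable_set V A (last ` \<P>)"
    using assms(2) by auto
  then show ?thesis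
    using that path_partition_last_subset[OF assms(1)] unfolding stable_set_def adj_def by blast
qed

(* The last step of the Gallai-Milgram induction: last pb has been deleted, and it is
   reattached to a path of Q ending in last pa or in b'. *)
lemma path_partition_reattach:
  assumes part: "path_partition V A \<P>"
    and ends: "pa \<in> \<P>" "pb \<in> \<P>" "pa \<noteq> pb" "(last pa, last pb) \<in> A"
    and \<Q>: "path_partition (V - {last pb}) A \<Q>" "Suc (card \<Q>) = card \<P>"
      "last ` \<Q> \<subseteq> insert b' (last ` (\<P> - {pb}))"
    and "(b', last pb) \<in> A"
  shows "\<exists>\<Q>'. path_partition V A \<Q>' \<and> Suc (card \<Q>') = card \<P> \<and> last ` \<Q>' \<subseteq> last ` \<P>"
proof -
  have "finite \<P>" using part unfolding path_partition_def by blast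
  have "last pa \<in> last ` (\<P> - {pb})" using ends(1,3) by blast
  moreover have "card (last ` (\<P> - {pb})) \<le> card (last ` \<Q>)"
    using card_image_le[of "\<P> - {pb}" last] \<open>finite \<P>\<close> \<Q>(2) ends(2)
      card_image[OF path_partition_inj_on_last[OF \<Q>(1)]] by simp
  ultimately obtain R where R: "R \<in> \<Q>" "last R \<in> {last pa, b'}"
      and rest: "last ` \<Q> - {last R} \<subseteq> last ` (\<P> - {pb})"
    using subset_insert_meets_pair[OF _ \<Q>(3)] \<open>finite \<P>\<close> by blast
  have "last pb \<in> V" using path_partition_last_subset[OF part] ends(2) by blast
  have "(last R, last pb) \<in> A" using R(2) ends(4) \<open>(b', last pb) \<in> A\<close> by auto
  note merged = path_partition_append[OF \<Q>(1) \<open>last pb \<in> V\<close> R(1) this]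
  have "last ` (\<Q> - {R}) = last ` \<Q> - {last R}"
    using path_partition_inj_on_last[OF \<Q>(1)] R(1) by (auto simp: inj_on_def)
  then have "last ` insert (R @ [last pb]) (\<Q> - {R}) \<subseteq> last ` \<P>"
    using rest ends(2) by auto
  then show ?thesis using merged \<Q>(2) by metis
qed

lemma path_partition_one_fewer:
  assumes "finite V" and loopless: "\<And>u. (u, u) \<notin> A"
    and "path_partition V A \<P>" and "\<forall>S. stable_set V A S \<longrightarrow> card S < card \<P>"
  shows "\<exists>\<Q>. path_partition V A \<Q> \<and> Suc (card \<Q>) = card \<P> \<and> last ` \<Q> \<subseteq> last ` \<P>"
  using assms(1,3,4)
proof (induction V arbitrary: \<P> rule: finite_remove_induct)
  case empty
  then have "\<P> = {}"
    unfolding path_partition_def directed_path_def by auto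
  moreover have "stable_set {} A {}" unfolding stable_set_def by simp
  ultimately show ?case using empty.prems(2) by auto
next
  case (remove V \<P>)
  note part = remove.prems(1)
  obtain pa pb where ends: "pa \<in> \<P>" "pb \<in> \<P>" "(last pa, last pb) \<in> A"
    using path_partition_arc_between_ends[OF part remove.prems(2)] .
  define b where "b = last pb"
  have "pa \<noteq> pb" using ends(3) loopless by auto
  have "b \<in> V" using path_partition_last_subset[OF part] ends(2) unfolding b_def by blast
  obtain \<Q> b' where "path_partition (V - {b}) A \<Q>" "Suc (card \<Q>) = card \<P>"
      "last ` \<Q> \<subseteq> insert b' (last ` (\<P> - {pb}))" and "(b', b) \<in> A"
  proof (cases "butlast pb = []")
    case True
    then have "pb = [b]"
      using part ends(2) unfolding b_def path_partition_def directed_path_def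
      by (metis append_butlast_last_id append_Nil)
    then have "path_partition (V - {b}) A (\<P> - {pb})"
      using path_partition_remove[OF part ends(2)] by simp
    moreover have "Suc (card (\<P> - {pb})) = card \<P>"
      using part ends(2) unfolding path_partition_def by (metis card_Suc_Diff1)
    ultimately show ?thesis using that[of "\<P> - {pb}" "last pa"] ends(3) unfolding b_def by blast
  next
    case False
    define q where "q = butlast pb"
    have "pb = q @ [b]"
      using part ends(2) unfolding q_def b_def path_partition_def directed_path_def by simp
    note shorter = path_partition_butlast[OF part ends(2)[unfolded this] False[folded q_def]]
    have "(last q, b) \<in> A"
      using part ends(2) \<open>pb = q @ [b]\<close> False[folded q_def]
      unfolding path_partition_def directed_path_def by (auto simp: successively_append_iff)
    have "\<forall>S. stable_set (V - {b}) A S \<longrightarrow> card S < card (insert q (\<P> - {pb}))"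
      using remove.prems(2) shorter(2) \<open>pb = q @ [b]\<close> unfolding stable_set_def by auto
    then obtain \<Q> where "path_partition (V - {b}) A \<Q>" "Suc (card \<Q>) = card \<P>"
        "last ` \<Q> \<subseteq> last ` insert q (\<P> - {pb})"
      using remove.IH[OF \<open>b \<in> V\<close>] shorter \<open>pb = q @ [b]\<close> by metis
    then show ?thesis using that \<open>(last q, b) \<in> A\<close> by auto
  qed
  then show ?case
    using path_partition_reattach[OF part ends(1,2) \<open>pa \<noteq> pb\<close> ends(3)] unfolding b_def by blast
qed

lemma card_le_stability_number:
  assumes "finite V" and "stable_set V A S"
  shows "card S \<le> stability_number V A"
proof -
  have "finite {S. stable_set V A S}"
    using \<open>finite V\<close> unfolding stable_set_def by simp
  then show ?thesis
    unfolding stability_number_def using assms(2) by (intro Max_ge) auto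
qed

theorem gallai_milgram:
  assumes "finite V" and loopless: "\<And>u. (u, u) \<notin> A"
  shows "\<exists>\<P>. path_partition V A \<P> \<and> card \<P> \<le> stability_number V A"
proof -
  obtain \<P> where "path_partition V A \<P>"
    and fewest: "\<And>\<Q>. path_partition V A \<Q> \<Longrightarrow> card \<P> \<le> card \<Q>"
    using ex_has_least_nat[of "path_partition V A" _ card]
      path_partition_singletons[OF \<open>finite V\<close>] by metis
  moreover have "card \<P> \<le> stability_number V A"
  proof (rule ccontr)
    assume "\<not> card \<P> \<le> stability_number V A"
    then have "\<forall>S. stable_set V A S \<longrightarrow> card S < card \<P>"
      using card_le_stability_number[OF \<open>finite V\<close>] by force
    then show False
      using path_partition_one_fewer[OF \<open>finite V\<close> loopless \<open>path_partition V A \<P>\<close>] fewest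
      by force
  qed
  ultimately show ?thesis by blast
qed

theorem corollary1:
  fixes V :: "'a set" and A :: "('a \<times> 'a) set" and k1 k2 :: nat
  assumes "oriented_graph V A"
    and "k1 \<ge> 1" and "k2 \<ge> 1"
    and "\<not> contains_subdiv_C V A k1 k2"
  shows "chromatic_number V A \<le> 3 * stability_number V A * max k1 k2"
proof -
  define k where "k = max k1 k2"
  have "finite V" and loopless: "\<And>u. (u, u) \<notin> A"
    using assms(1) unfolding oriented_graph_def by auto
  obtain \<P> where \<P>: "path_partition V A \<P>" "card \<P> \<le> stability_number V A"
    using gallai_milgram[OF \<open>finite V\<close> loopless] by blast
  have "\<exists>c. proper_colouring (set p) A (3 * k) c" if "p \<in> \<P>" for p
    using path_colouring[OF loopless _ path_partition_set_subset[OF \<P>(1) that] assms(4)]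
      \<P>(1) that assms(2) unfolding path_partition_def k_def by auto
  moreover have "finite (set ` \<P>)" "V \<subseteq> \<Union> (set ` \<P>)"
    using \<P>(1) unfolding path_partition_def by auto
  ultimately obtain c where "proper_colouring V A (3 * k * card (set ` \<P>)) c"
    using proper_colouring_Union[of "set ` \<P>" V A "3 * k"] by blast
  moreover have "3 * k * card (set ` \<P>) \<le> 3 * stability_number V A * k"
    using card_image_le[of \<P> set] \<P> unfolding path_partition_def by simp
  ultimately show ?thesis
    unfolding k_def by (meson chromatic_number_le proper_colouring_mono)
qed

end
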